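(* Let $c>\frac12$ and $\delta>0$ be fixed. Let $\ell\ge3$ and let $\ell_1,\ell_2,\ell_3$ be positive integers with $\ell_1+\ell_2+\ell_3=\ell$. Then there exist constants $K>0$ and $0<\rho<1$, depending only on $\ell,c,\delta$ (not on $n$), such that for all $n\ge1$ $$V_n^{-2\ell c}\int_{\mathbb R^n}\int_{\mathbb R^n}f^*_{c,\delta}(\mathbf x_1)^{\ell_1}f^*_{c,\delta}(\mathbf x_2)^{\ell_2}f^*_{c,\delta}(\mathbf x_1+\mathbf x_2)^{\ell_3}\,d\mathbf x_1\,d\mathbf x_2\le K\rho^n.$$
   Context: $V_n=\pi^{n/2}/\Gamma(\frac n2+1)$ is the volume of the unit ball in $\mathbb R^n$, $R_n(\delta)=(\delta/V_n)^{1/n}$, and $f^*_{c,\delta}(\mathbf x)=\big(|\mathbf x|^n+R_n(\delta)^n\big)^{-2c}$ for $\mathbf x\in\mathbb R^n$. *)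

theory Defs
  imports "HOL-Analysis.Analysis"
begin

text \<open>Points of R^n are represented as functions nat => real on the index set {..<n},
  with the product Lebesgue measure PiM {..<n} (lambda _. lborel).\<close>

definition Vn :: "nat \<Rightarrow> real" where
  "Vn n = pi powr (real n / 2) / Gamma (real n / 2 + 1)"

definition Rn :: "nat \<Rightarrow> real \<Rightarrow> real" where
  "Rn n \<delta> = (\<delta> / Vn n) powr (1 / real n)"

definition eucl_norm :: "nat \<Rightarrow> (nat \<Rightarrow> real) \<Rightarrow> real" where
  "eucl_norm n x = sqrt (\<Sum>i<n. (x i)\<^sup>2)"

definition fstar :: "nat \<Rightarrow> real \<Rightarrow> real \<Rightarrow> (nat \<Rightarrow> real) \<Rightarrow> real" where
  "fstar n c \<delta> x = (eucl_norm n x ^ n + Rn n \<delta> ^ n) powr (- 2 * c)"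

abbreviation Rspace :: "nat \<Rightarrow> (nat \<Rightarrow> real) measure" where
  "Rspace n \<equiv> PiM {..<n} (\<lambda>_. lborel)"

end

theory Submission
  imports Defs "HOL-Probability.Probability"
begin

text \<open>The function \<open>(|x|^n + R^n)^(-p)\<close> is dominated by a series of Gaussians, one for each
  shell \<open>R q^(k-1) < |x| \<le> R q^k\<close>, with geometrically decaying weights. After bounding all but
  one power of each factor \<open>f*\<close> by its maximum, the double integral is dominated by a triple
  series of Gaussian integrals \<open>(pi / sqrt (a1 a2 + a2 a3 + a3 a1))^n\<close>; AM-GM on the pairwise
  products of the rates keeps this series geometric as soon as \<open>p > 2/3\<close>. What remains is
  \<open>R^(2n)\<close> times an explicit \<open>C^n\<close>. Since \<open>R^n = \<delta>/V_n\<close> and \<open>1/V_n^2 = Gamma(n/2+1)^2 / pi^n\<close>,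
  the bound \<open>Gamma(x+1) \<le> (x/(\<kappa> e))^x / (1-\<kappa>)\<close> turns the normalised integral into
  \<open>K (e^(1/2) q^(6c) / (\<kappa> sqrt 3))^n\<close>, and because \<open>e < 3\<close> the parameters \<open>q > 1\<close> and
  \<open>\<kappa> < 1\<close> can be chosen to make the base less than 1.\<close>

section \<open>Gaussian integrals on \<open>\<real>\<^sup>n\<close>\<close>

lemma nn_integral_exp_neg_quadratic:
  fixes p q :: real
  assumes p: "p > 0"
  shows "(\<integral>\<^sup>+y. ennreal (exp (-(p*y\<^sup>2 + 2*q*y))) \<partial>lborel) = ennreal (sqrt (pi/p) * exp (q\<^sup>2/p))"
proof -
  define \<sigma> where "\<sigma> = sqrt (1/(2*p))"
  have \<sigma>2: "2*\<sigma>\<^sup>2 = 1/p" and \<sigma>: "\<sigma> > 0" using p by (simp_all add: \<sigma>_def)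
  \<comment> \<open>completing the square: the integrand is a multiple of the density of \<open>N(-q/p, \<sigma>\<^sup>2)\<close>\<close>
  have density: "exp (-(p*y\<^sup>2 + 2*q*y)) = (sqrt (pi/p) * exp (q\<^sup>2/p)) * normal_density (-q/p) \<sigma> y" for y
  proof -
    have "-(y - -q/p)\<^sup>2/(2*\<sigma>\<^sup>2) = -(p*y\<^sup>2 + 2*q*y) - q\<^sup>2/p"
      using p unfolding \<sigma>2 by (simp add: field_simps power2_eq_square)
    moreover have "2*pi*\<sigma>\<^sup>2 = pi/p" using \<sigma>2 by (metis mult.assoc mult.commute times_divide_eq_right mult_1_right)
    ultimately show ?thesis using p by (simp add: normal_density_def exp_diff)
  qed
  have "(\<integral>\<^sup>+y. ennreal (exp (-(p*y\<^sup>2 + 2*q*y))) \<partial>lborel)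
      = (\<integral>\<^sup>+y. ennreal (sqrt (pi/p) * exp (q\<^sup>2/p)) * ennreal (normal_density (-q/p) \<sigma> y) \<partial>lborel)"
    by (intro nn_integral_cong, subst density, rule ennreal_mult) (use p in auto)
  also have "\<dots> = ennreal (sqrt (pi/p) * exp (q\<^sup>2/p)) * (\<integral>\<^sup>+y. ennreal (normal_density (-q/p) \<sigma> y) \<partial>lborel)"
    by (rule nn_integral_cmult) simp
  also have "(\<integral>\<^sup>+y. ennreal (normal_density (-q/p) \<sigma> y) \<partial>lborel) = 1"
    by (subst nn_integral_eq_integral) (use \<sigma> in auto)
  finally show ?thesis by simp
qed

lemma nn_integral_Rspace_prod:
  fixes g :: "nat \<Rightarrow> real \<Rightarrow> real"
  assumes "\<And>i. g i \<in> borel_measurable borel" "\<And>i y. g i y \<ge> 0"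
  shows "(\<integral>\<^sup>+x. ennreal (\<Prod>i<n. g i (x i)) \<partial>Rspace n) = (\<Prod>i<n. \<integral>\<^sup>+y. ennreal (g i y) \<partial>lborel)"
proof -
  interpret product_sigma_finite "\<lambda>_::nat. lborel::real measure" by standard
  have "(\<integral>\<^sup>+x. ennreal (\<Prod>i<n. g i (x i)) \<partial>Rspace n) = (\<integral>\<^sup>+x. (\<Prod>i<n. ennreal (g i (x i))) \<partial>Rspace n)"
    by (simp add: prod_ennreal assms)
  also have "\<dots> = (\<Prod>i<n. \<integral>\<^sup>+y. ennreal (g i y) \<partial>lborel)"
    by (rule product_nn_integral_prod) (use assms in auto)
  finally show ?thesis .
qed

lemma nn_integral_exp_neg_ternary_form:
  fixes a b c x :: real
  assumes "b + c > 0"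
  shows "(\<integral>\<^sup>+y. ennreal (exp (-(a*x\<^sup>2 + b*y\<^sup>2 + c*(x + y)\<^sup>2))) \<partial>lborel)
       = ennreal (sqrt (pi/(b+c)) * exp (-((a*b+b*c+c*a)/(b+c)) * x\<^sup>2))"
proof -
  have split: "exp (-(a*x\<^sup>2 + b*y\<^sup>2 + c*(x + y)\<^sup>2)) = exp (-((a+c)*x\<^sup>2)) * exp (-((b+c)*y\<^sup>2 + 2*(c*x)*y))" for y
    unfolding mult_exp_exp by (simp add: algebra_simps power2_eq_square)
  have "-((a+c)*x\<^sup>2) + (c*x)\<^sup>2/(b+c) = -((a*b+b*c+c*a)/(b+c)) * x\<^sup>2"
    using assms by (simp add: field_simps power2_eq_square)
  then have collect: "exp (-((a+c)*x\<^sup>2)) * (sqrt (pi/(b+c)) * exp ((c*x)\<^sup>2/(b+c)))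
      = sqrt (pi/(b+c)) * exp (-((a*b+b*c+c*a)/(b+c)) * x\<^sup>2)"
    by (metis mult.left_commute mult_exp_exp)
  have "(\<integral>\<^sup>+y. ennreal (exp (-(a*x\<^sup>2 + b*y\<^sup>2 + c*(x + y)\<^sup>2))) \<partial>lborel)
      = (\<integral>\<^sup>+y. ennreal (exp (-((a+c)*x\<^sup>2))) * ennreal (exp (-((b+c)*y\<^sup>2 + 2*(c*x)*y))) \<partial>lborel)"
    by (intro nn_integral_cong, subst split, rule ennreal_mult) auto
  also have "\<dots> = ennreal (exp (-((a+c)*x\<^sup>2))) * (\<integral>\<^sup>+y. ennreal (exp (-((b+c)*y\<^sup>2 + 2*(c*x)*y))) \<partial>lborel)"
    by (rule nn_integral_cmult) simp
  also have "\<dots> = ennreal (exp (-((a+c)*x\<^sup>2)) * (sqrt (pi/(b+c)) * exp ((c*x)\<^sup>2/(b+c))))"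
    by (subst nn_integral_exp_neg_quadratic[OF assms]) (use assms in \<open>simp add: ennreal_mult\<close>)
  finally show ?thesis unfolding collect .
qed

lemma nn_integral_gaussian_pair:
  fixes a b c :: real
  assumes a: "a > 0" and b: "b > 0" and c: "c > 0"
  shows "(\<integral>\<^sup>+x1. \<integral>\<^sup>+x2. ennreal (\<Prod>i<n. exp (-(a*(x1 i)\<^sup>2 + b*(x2 i)\<^sup>2 + c*(x1 i + x2 i)\<^sup>2))) \<partial>Rspace n \<partial>Rspace n)
       = ennreal ((pi / sqrt (a*b+b*c+c*a))^n)"
proof -
  define P where "P = (a*b+b*c+c*a)/(b+c)"
  have bc: "b + c > 0" using b c by simp
  have S: "a*b+b*c+c*a > 0" using assms by (intro add_pos_pos mult_pos_pos)
  have P: "P > 0" using S bc by (simp add: P_def)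
  have inner: "(\<integral>\<^sup>+x2. ennreal (\<Prod>i<n. exp (-(a*(x1 i)\<^sup>2 + b*(x2 i)\<^sup>2 + c*(x1 i + x2 i)\<^sup>2))) \<partial>Rspace n)
      = ennreal (\<Prod>i<n. sqrt (pi/(b+c)) * exp (-P * (x1 i)\<^sup>2))" for x1 :: "nat \<Rightarrow> real"
  proof -
    have "(\<integral>\<^sup>+x2. ennreal (\<Prod>i<n. exp (-(a*(x1 i)\<^sup>2 + b*(x2 i)\<^sup>2 + c*(x1 i + x2 i)\<^sup>2))) \<partial>Rspace n)
        = (\<Prod>i<n. \<integral>\<^sup>+y. ennreal (exp (-(a*(x1 i)\<^sup>2 + b*y\<^sup>2 + c*(x1 i + y)\<^sup>2))) \<partial>lborel)"
      by (rule nn_integral_Rspace_prod[where g="\<lambda>i y. exp (-(a*(x1 i)\<^sup>2 + b*y\<^sup>2 + c*(x1 i + y)\<^sup>2))"]) auto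
    also have "\<dots> = (\<Prod>i<n. ennreal (sqrt (pi/(b+c)) * exp (-P * (x1 i)\<^sup>2)))"
      unfolding P_def by (simp only: nn_integral_exp_neg_ternary_form[OF bc])
    also have "\<dots> = ennreal (\<Prod>i<n. sqrt (pi/(b+c)) * exp (-P * (x1 i)\<^sup>2))"
      by (rule prod_ennreal) (use bc in simp)
    finally show ?thesis .
  qed
  have outer: "(\<integral>\<^sup>+y. ennreal (sqrt (pi/(b+c)) * exp (-P * y\<^sup>2)) \<partial>lborel) = ennreal (pi / sqrt (a*b+b*c+c*a))"
  proof -
    have "sqrt (pi/(b+c)) * sqrt (pi/P) = sqrt (pi\<^sup>2 / (a*b+b*c+c*a))"
      using bc by (simp add: P_def real_sqrt_mult[symmetric] power2_eq_square)
    also have "\<dots> = pi / sqrt (a*b+b*c+c*a)" by (simp add: real_sqrt_divide)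
    finally have "sqrt (pi/(b+c)) * sqrt (pi/P) = pi / sqrt (a*b+b*c+c*a)" .
    moreover have "(\<integral>\<^sup>+y. ennreal (sqrt (pi/(b+c)) * exp (-P * y\<^sup>2)) \<partial>lborel)
        = ennreal (sqrt (pi/(b+c))) * (\<integral>\<^sup>+y. ennreal (exp (-(P*y\<^sup>2 + 2*0*y))) \<partial>lborel)"
      by (subst nn_integral_cmult[symmetric]) (use bc in \<open>auto intro!: nn_integral_cong simp: ennreal_mult\<close>)
    moreover have "(\<integral>\<^sup>+y. ennreal (exp (-(P*y\<^sup>2 + 2*0*y))) \<partial>lborel) = ennreal (sqrt (pi/P))"
      using nn_integral_exp_neg_quadratic[OF P, of 0] by simp
    ultimately show ?thesis using bc P by (simp add: ennreal_mult[symmetric])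
  qed
  have "(\<integral>\<^sup>+x1. \<integral>\<^sup>+x2. ennreal (\<Prod>i<n. exp (-(a*(x1 i)\<^sup>2 + b*(x2 i)\<^sup>2 + c*(x1 i + x2 i)\<^sup>2))) \<partial>Rspace n \<partial>Rspace n)
      = (\<integral>\<^sup>+x1. ennreal (\<Prod>i<n. sqrt (pi/(b+c)) * exp (-P * (x1 i)\<^sup>2)) \<partial>Rspace n)"
    by (simp only: inner)
  also have "\<dots> = (\<Prod>i<n. \<integral>\<^sup>+y. ennreal (sqrt (pi/(b+c)) * exp (-P * y\<^sup>2)) \<partial>lborel)"
    by (rule nn_integral_Rspace_prod[where g="\<lambda>i y. sqrt (pi/(b+c)) * exp (-P * y\<^sup>2)"]) (use bc in auto)
  also have "\<dots> = ennreal ((pi / sqrt (a*b+b*c+c*a))^n)"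
    using S by (simp only: outer prod_constant card_lessThan) (simp add: ennreal_power)
  finally show ?thesis .
qed

lemma sigma_finite_Rspace: "sigma_finite_measure (Rspace n)"
proof -
  interpret product_sigma_finite "\<lambda>_::nat. lborel::real measure" by standard
  show ?thesis by (rule sigma_finite) simp
qed

lemma borel_measurable_nn_integral_Rspace:
  "case_prod f \<in> borel_measurable (N \<Otimes>\<^sub>M Rspace n) \<Longrightarrow> (\<lambda>x. \<integral>\<^sup>+y. f x y \<partial>Rspace n) \<in> borel_measurable N"
  by (rule sigma_finite_measure.borel_measurable_nn_integral[OF sigma_finite_Rspace])

lemma nn_integral_Rspace_pair_cmult:
  assumes f: "case_prod f \<in> borel_measurable (Rspace n \<Otimes>\<^sub>M Rspace n)"
  shows "(\<integral>\<^sup>+x1. \<integral>\<^sup>+x2. c * f x1 x2 \<partial>Rspace n \<partial>Rspace n) = c * (\<integral>\<^sup>+x1. \<integral>\<^sup>+x2. f x1 x2 \<partial>Rspace n \<partial>Rspace n)"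
proof -
  have "(\<integral>\<^sup>+x1. \<integral>\<^sup>+x2. c * f x1 x2 \<partial>Rspace n \<partial>Rspace n) = (\<integral>\<^sup>+x1. c * \<integral>\<^sup>+x2. f x1 x2 \<partial>Rspace n \<partial>Rspace n)"
    using measurable_Pair2[OF f] by (intro nn_integral_cong nn_integral_cmult) simp
  also have "\<dots> = c * (\<integral>\<^sup>+x1. \<integral>\<^sup>+x2. f x1 x2 \<partial>Rspace n \<partial>Rspace n)"
    using f by (intro nn_integral_cmult borel_measurable_nn_integral_Rspace)
  finally show ?thesis .
qed

section \<open>Domination by a series of Gaussians\<close>

lemma eucl_norm_nonneg: "eucl_norm n x \<ge> 0"
  unfolding eucl_norm_def by (simp add: sum_nonneg)

lemma exp_neg_sq_eucl_norm: "exp (-a * (eucl_norm n x)\<^sup>2) = (\<Prod>i<n. exp (-a * (x i)\<^sup>2))"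
  unfolding eucl_norm_def by (simp add: sum_nonneg exp_sum sum_distrib_left)

lemma ennreal_le_suminf: "(f k :: ennreal) \<le> (\<Sum>i. f i)"
  using sum_le_suminf[OF summableI, of "{k}" f] by simp

lemma shell_index_exists:
  fixes R q s :: real
  assumes R: "R > 0" and q: "q > 1"
  obtains k :: nat where "R * q powr (real k - 1) \<le> max s R" and "s \<le> R * q^k"
proof -
  define t where "t = log q (max s R / R)"
  have t: "t \<ge> 0" using R q by (simp add: t_def)
  have qt: "R * q powr t = max s R" using R q by (simp add: t_def)
  define k where "k = nat \<lceil>t\<rceil>"
  have "real k - 1 < t" "t \<le> real k" using t by (auto simp: k_def) linarith
  then have "q powr (real k - 1) < q powr t" "q powr t \<le> q powr real k" using q by auto
  then have "R * q powr (real k - 1) \<le> R * q powr t" "R * q powr t \<le> R * q^k"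
    using R q by (auto simp: powr_realpow)
  then show ?thesis using qt by (intro that) auto
qed

text \<open>\<open>shell_weight R q p n k * exp (-shell_rate R q n k * s\<^sup>2)\<close> is
  \<open>(R q^(k-1))^(-p n) exp (n/2 (1 - s\<^sup>2 / (R q^k)\<^sup>2))\<close>, the Gaussian that dominates
  \<open>(s^n + R^n)^(-p)\<close> on the shell \<open>R q^(k-1) < s \<le> R q^k\<close>.\<close>

definition shell_weight :: "real \<Rightarrow> real \<Rightarrow> real \<Rightarrow> nat \<Rightarrow> nat \<Rightarrow> real" where
  "shell_weight R q p n k = (R/q) powr (-p*n) * (q powr (-p*n))^k * exp (n/2)"

definition shell_rate :: "real \<Rightarrow> real \<Rightarrow> nat \<Rightarrow> nat \<Rightarrow> real" where
  "shell_rate R q n k = n/(2*R\<^sup>2) * (q powr (-2))^k"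

lemma shell_weight_nonneg: "shell_weight R q p n k \<ge> 0"
  by (simp add: shell_weight_def)

lemma powr_neg_le_suminf_shells:
  fixes s R q p :: real and n :: nat
  assumes s: "s \<ge> 0" and R: "R > 0" and q: "q > 1" and p: "p \<ge> 0"
  shows "ennreal ((s^n + R^n) powr (-p))
    \<le> (\<Sum>k. ennreal (shell_weight R q p n k * exp (-shell_rate R q n k * s\<^sup>2)))"
proof -
  obtain k where lower: "R * q powr (real k - 1) \<le> max s R" and upper: "s \<le> R * q^k"
    using shell_index_exists[OF R q] .
  have "(s^n + R^n) powr (-p) \<le> (max s R ^ n) powr (-p)"
    using R s p by (intro powr_mono2') (auto simp: max_def)
  also have "\<dots> = max s R powr (-p*n)"
    using R by (simp add: powr_realpow[symmetric] powr_powr mult.commute)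
  also have "\<dots> \<le> (R * q powr (real k - 1)) powr (-p*n)"
    using R q p lower by (intro powr_mono2') auto
  also have "\<dots> = (R/q) powr (-p*n) * (q powr (-p*n))^k"
  proof -
    have "R * q powr (real k - 1) = (R/q) * q powr real k" using q by (simp add: powr_diff)
    moreover have "(q powr real k) powr (-p*n) = (q powr (-p*n))^k"
      using q by (simp add: powr_powr powr_power mult.commute)
    ultimately show ?thesis by (simp only: powr_mult)
  qed
  also have "\<dots> \<le> shell_weight R q p n k * exp (-shell_rate R q n k * s\<^sup>2)"
  proof -
    have "s\<^sup>2 \<le> (R * q^k)\<^sup>2" using s upper by (intro power_mono) auto
    then have "(q powr (-2))^k * s\<^sup>2 \<le> (q powr (-2))^k * (R * q^k)\<^sup>2" by (simp add: mult_left_mono)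
    also have "\<dots> = R\<^sup>2"
      using q by (simp add: powr_minus power_inverse powr_realpow' power_mult_distrib mult.commute flip: power_mult)
    finally have "(q powr (-2))^k * s\<^sup>2 / R\<^sup>2 \<le> 1" using R by simp
    then have "0 \<le> n/2 * (1 - (q powr (-2))^k * s\<^sup>2 / R\<^sup>2)" by simp
    also have "\<dots> = n/2 + -shell_rate R q n k * s\<^sup>2" using R by (simp add: shell_rate_def field_simps)
    finally have "1 \<le> exp (n/2) * exp (-shell_rate R q n k * s\<^sup>2)"
      by (simp add: exp_add[symmetric])
    then have "(R/q) powr (-p*n) * (q powr (-p*n))^k * 1
        \<le> (R/q) powr (-p*n) * (q powr (-p*n))^k * (exp (n/2) * exp (-shell_rate R q n k * s\<^sup>2))"
      by (intro mult_left_mono) auto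
    then show ?thesis by (simp only: mult_1_right shell_weight_def mult.assoc)
  qed
  finally have "ennreal ((s^n + R^n) powr (-p)) \<le> ennreal (shell_weight R q p n k * exp (-shell_rate R q n k * s\<^sup>2))"
    by (rule ennreal_leI)
  also have "\<dots> \<le> (\<Sum>k. ennreal (shell_weight R q p n k * exp (-shell_rate R q n k * s\<^sup>2)))"
    by (rule ennreal_le_suminf)
  finally show ?thesis .
qed

section \<open>The triple integral\<close>

lemma three_mult_le_sum_cubes:
  fixes x y z :: real
  assumes "x \<ge> 0" "y \<ge> 0" "z \<ge> 0"
  shows "3 * (x*y*z) \<le> x^3 + y^3 + z^3"
proof -
  have "x^3 + y^3 + z^3 - 3*(x*y*z) = (x+y+z) * ((x-y)\<^sup>2 + (y-z)\<^sup>2 + (z-x)\<^sup>2) / 2"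
    by (simp add: algebra_simps power2_eq_square power3_eq_cube)
  also have "\<dots> \<ge> 0" using assms by simp
  finally show ?thesis by simp
qed

lemma pairwise_products_ge:
  fixes x y z :: real
  assumes "x > 0" "y > 0" "z > 0"
  shows "3 * (x*y*z) powr (2/3) \<le> x*y + y*z + z*x"
proof -
  have cube: "(u powr (1/3))^3 = u" if "u > 0" for u :: real
    using that powr_power[of u "1/3" 3] by simp
  have "(x*y) powr (1/3) * (y*z) powr (1/3) * (z*x) powr (1/3) = ((x*y*z) powr 2) powr (1/3)"
    by (simp only: powr_mult[symmetric]) (use assms in \<open>simp add: powr_realpow' power2_eq_square mult_ac\<close>)
  also have "\<dots> = (x*y*z) powr (2/3)" by (simp add: powr_powr)
  finally show ?thesis
    using three_mult_le_sum_cubes[of "(x*y) powr (1/3)" "(y*z) powr (1/3)" "(z*x) powr (1/3)"] assms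
    by (simp add: cube)
qed

lemma suminf_mult3_ennreal:
  fixes f g h :: "nat \<Rightarrow> ennreal"
  shows "(\<Sum>i. f i) * (\<Sum>j. g j) * (\<Sum>k. h k) = (\<Sum>i. \<Sum>j. \<Sum>k. f i * g j * h k)"
proof -
  have "(\<Sum>i. f i) * (\<Sum>j. g j) * (\<Sum>k. h k) = (\<Sum>i. f i * ((\<Sum>j. g j) * (\<Sum>k. h k)))"
    by (simp add: mult.assoc)
  also have "\<dots> = (\<Sum>i. \<Sum>j. f i * (g j * (\<Sum>k. h k)))" by simp
  finally show ?thesis by (simp add: mult.assoc)
qed

lemma suminf3_geometric_ennreal:
  fixes u Z :: real
  assumes u: "0 \<le> u" "u < 1" and Z: "Z \<ge> 0"
  shows "(\<Sum>k1. \<Sum>k2. \<Sum>k3. ennreal (Z * u^k1 * u^k2 * u^k3)) = ennreal (Z / (1-u)^3)"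
proof -
  have geom: "(\<Sum>k. ennreal (u^k)) = ennreal (1/(1-u))"
    using u by (subst suminf_ennreal2) (auto simp: suminf_geometric)
  have "(\<Sum>k1. \<Sum>k2. \<Sum>k3. ennreal (Z * u^k1 * u^k2 * u^k3))
      = (\<Sum>k1. \<Sum>k2. \<Sum>k3. ennreal (Z * u^k1) * ennreal (u^k2) * ennreal (u^k3))"
    using u Z by (simp add: ennreal_mult)
  also have "\<dots> = (\<Sum>k. ennreal (Z * u^k)) * (\<Sum>k. ennreal (u^k)) * (\<Sum>k. ennreal (u^k))"
    by (rule suminf_mult3_ennreal[symmetric])
  also have "(\<Sum>k. ennreal (Z * u^k)) = ennreal Z * (\<Sum>k. ennreal (u^k))"
    using u Z by (simp add: ennreal_mult)
  also have "ennreal Z * (\<Sum>k. ennreal (u^k)) * (\<Sum>k. ennreal (u^k)) * (\<Sum>k. ennreal (u^k)) = ennreal (Z / (1-u)^3)"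
    using u Z by (simp add: geom ennreal_mult[symmetric] power3_eq_cube)
  finally show ?thesis .
qed

lemma pi_div_sqrt_shell_rates_le:
  fixes \<beta> q :: real and n k1 k2 k3 :: nat
  assumes \<beta>: "\<beta> > 0" and q: "q > 1"
  defines "\<alpha> \<equiv> \<lambda>k. \<beta> * (q powr (-2))^k"
  shows "(pi / sqrt (\<alpha> k1 * \<alpha> k2 + \<alpha> k2 * \<alpha> k3 + \<alpha> k3 * \<alpha> k1))^n
    \<le> (pi / (sqrt 3 * \<beta>))^n * (q powr (2*n/3))^(k1+k2+k3)"
proof -
  define K where "K = real (k1+k2+k3)"
  have \<alpha>: "\<alpha> k = \<beta> * q powr (-2 * k)" for k
    using q by (simp add: \<alpha>_def powr_power mult.commute)
  have "(\<alpha> k1 * \<alpha> k2 * \<alpha> k3) powr (2/3) = (\<beta>^3 * q powr (-2*K)) powr (2/3)"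
    using q by (simp add: \<alpha> K_def powr_add[symmetric] algebra_simps power3_eq_cube)
  also have "\<dots> = (sqrt 3 * \<beta> * q powr (-2*K/3))\<^sup>2 / 3"
  proof -
    have "(\<beta>^3) powr (2/3) = \<beta>\<^sup>2"
      using \<beta> powr_powr[of \<beta> 3 "2/3"] by simp
    moreover have "(q powr (-2*K)) powr (2/3) = (q powr (-2*K/3))\<^sup>2"
      by (simp add: powr_powr powr_add[symmetric] power2_eq_square)
    ultimately show ?thesis by (simp add: powr_mult power_mult_distrib)
  qed
  finally have "(sqrt 3 * \<beta> * q powr (-2*K/3))\<^sup>2 \<le> \<alpha> k1 * \<alpha> k2 + \<alpha> k2 * \<alpha> k3 + \<alpha> k3 * \<alpha> k1"
    using pairwise_products_ge[of "\<alpha> k1" "\<alpha> k2" "\<alpha> k3"] \<beta> q by (simp add: \<alpha>)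
  then have lower: "sqrt 3 * \<beta> * q powr (-2*K/3) \<le> sqrt (\<alpha> k1 * \<alpha> k2 + \<alpha> k2 * \<alpha> k3 + \<alpha> k3 * \<alpha> k1)"
    using real_le_rsqrt by blast
  have pos: "sqrt 3 * \<beta> * q powr (-2*K/3) > 0" using \<beta> q by simp
  have "pi / sqrt (\<alpha> k1 * \<alpha> k2 + \<alpha> k2 * \<alpha> k3 + \<alpha> k3 * \<alpha> k1) \<le> pi / (sqrt 3 * \<beta> * q powr (-2*K/3))"
    using pos lower by (intro frac_le) auto
  also have "\<dots> = pi / (sqrt 3 * \<beta>) * q powr (2*K/3)"
    by (simp add: powr_minus divide_simps)
  finally have "(pi / sqrt (\<alpha> k1 * \<alpha> k2 + \<alpha> k2 * \<alpha> k3 + \<alpha> k3 * \<alpha> k1))^n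
      \<le> (pi / (sqrt 3 * \<beta>) * q powr (2*K/3))^n"
    using pos lower by (intro power_mono) (auto simp del: real_sqrt_ge_0_iff)
  also have "\<dots> = (pi / (sqrt 3 * \<beta>))^n * (q powr (2*n/3))^(k1+k2+k3)"
  proof -
    have "(q powr (2*K/3))^n = (q powr (2*n/3))^(k1+k2+k3)"
      using q by (simp only: powr_power K_def) (simp add: algebra_simps)
    then show ?thesis by (simp only: power_mult_distrib)
  qed
  finally show ?thesis .
qed

lemma shell_triple_product_le:
  fixes R q p :: real and n :: nat and x1 x2 :: "nat \<Rightarrow> real"
  assumes R: "R > 0" and q: "q > 1" and p: "p \<ge> 0"
  defines "F \<equiv> \<lambda>x. ennreal ((eucl_norm n x ^ n + R^n) powr (-p))"
    and "w \<equiv> shell_weight R q p n" and "r \<equiv> shell_rate R q n"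
  shows "F x1 * F x2 * F (\<lambda>i. x1 i + x2 i) \<le> (\<Sum>k1. \<Sum>k2. \<Sum>k3. ennreal (w k1 * w k2 * w k3 *
           (\<Prod>i<n. exp (-(r k1 * (x1 i)\<^sup>2 + r k2 * (x2 i)\<^sup>2 + r k3 * (x1 i + x2 i)\<^sup>2)))))"
proof -
  define G where "G k x = ennreal (w k * (\<Prod>i<n. exp (-r k * (x i)\<^sup>2)))" for k x
  have shells: "F x \<le> (\<Sum>k. G k x)" for x
    using powr_neg_le_suminf_shells[OF eucl_norm_nonneg R q p, of n x]
    unfolding F_def G_def w_def r_def exp_neg_sq_eucl_norm .
  have product: "G k1 x1 * G k2 x2 * G k3 (\<lambda>i. x1 i + x2 i) = ennreal (w k1 * w k2 * w k3 *
      (\<Prod>i<n. exp (-(r k1 * (x1 i)\<^sup>2 + r k2 * (x2 i)\<^sup>2 + r k3 * (x1 i + x2 i)\<^sup>2))))" for k1 k2 k3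
  proof -
    have split: "exp (-(a*y1 + b*y2 + c*y3)) = exp (-a*y1) * exp (-b*y2) * exp (-c*y3)" for a b c y1 y2 y3 :: real
      unfolding mult_exp_exp by simp
    have "(\<Prod>i<n. exp (-(r k1 * (x1 i)\<^sup>2 + r k2 * (x2 i)\<^sup>2 + r k3 * (x1 i + x2 i)\<^sup>2)))
        = (\<Prod>i<n. exp (-r k1 * (x1 i)\<^sup>2)) * (\<Prod>i<n. exp (-r k2 * (x2 i)\<^sup>2))
          * (\<Prod>i<n. exp (-r k3 * (x1 i + x2 i)\<^sup>2))"
      by (simp only: split prod.distrib)
    moreover have "0 \<le> w k * (\<Prod>i<n. exp (f i))" for k and f :: "nat \<Rightarrow> real"
      by (simp add: w_def shell_weight_nonneg prod_nonneg)
    ultimately show ?thesis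
      by (simp add: G_def ennreal_mult'[symmetric] mult_ac)
  qed
  have "F x1 * F x2 * F (\<lambda>i. x1 i + x2 i) \<le> (\<Sum>k. G k x1) * (\<Sum>k. G k x2) * (\<Sum>k. G k (\<lambda>i. x1 i + x2 i))"
    by (intro mult_mono shells) auto
  also have "\<dots> = (\<Sum>k1. \<Sum>k2. \<Sum>k3. G k1 x1 * G k2 x2 * G k3 (\<lambda>i. x1 i + x2 i))"
    by (rule suminf_mult3_ennreal)
  finally show ?thesis by (simp only: product)
qed

lemma nn_integral_shell_term_le:
  fixes R q p :: real and n k1 k2 k3 :: nat
  assumes R: "R > 0" and q: "q > 1" and p: "p > 2/3" and n: "n \<ge> 1"
  defines "w \<equiv> shell_weight R q p n" and "r \<equiv> shell_rate R q n" and "u \<equiv> q powr (-(p - 2/3)*n)"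
  shows "(\<integral>\<^sup>+x1. \<integral>\<^sup>+x2. ennreal (w k1 * w k2 * w k3 *
           (\<Prod>i<n. exp (-(r k1 * (x1 i)\<^sup>2 + r k2 * (x2 i)\<^sup>2 + r k3 * (x1 i + x2 i)\<^sup>2)))) \<partial>Rspace n \<partial>Rspace n)
    \<le> ennreal (((R/q) powr (-p*n) * exp (n/2))^3 * (pi / (sqrt 3 * (n/(2*R\<^sup>2))))^n * u^k1 * u^k2 * u^k3)"
proof -
  define \<beta> where "\<beta> = n/(2*R\<^sup>2)"
  have \<beta>: "\<beta> > 0" using n R by (simp add: \<beta>_def)
  have r: "r k = \<beta> * (q powr (-2))^k" for k by (simp add: r_def shell_rate_def \<beta>_def)
  have r_pos: "r k > 0" for k using \<beta> q by (simp add: r)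
  define W where "W = w k1 * w k2 * w k3"
  have W: "W \<ge> 0" by (simp add: W_def w_def shell_weight_nonneg)
  have "(\<integral>\<^sup>+x1. \<integral>\<^sup>+x2. ennreal (W *
           (\<Prod>i<n. exp (-(r k1 * (x1 i)\<^sup>2 + r k2 * (x2 i)\<^sup>2 + r k3 * (x1 i + x2 i)\<^sup>2)))) \<partial>Rspace n \<partial>Rspace n)
      = ennreal W * (\<integral>\<^sup>+x1. \<integral>\<^sup>+x2. ennreal
           (\<Prod>i<n. exp (-(r k1 * (x1 i)\<^sup>2 + r k2 * (x2 i)\<^sup>2 + r k3 * (x1 i + x2 i)\<^sup>2))) \<partial>Rspace n \<partial>Rspace n)"
    using W by (subst nn_integral_Rspace_pair_cmult[symmetric]) (auto simp: ennreal_mult')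
  also have "\<dots> = ennreal (W * (pi / sqrt (r k1 * r k2 + r k2 * r k3 + r k3 * r k1))^n)"
    unfolding nn_integral_gaussian_pair[OF r_pos r_pos r_pos] using W by (simp add: ennreal_mult')
  also have "\<dots> \<le> ennreal (((R/q) powr (-p*n) * exp (n/2))^3 * (pi / (sqrt 3 * \<beta>))^n * u^k1 * u^k2 * u^k3)"
  proof (rule ennreal_leI)
    let ?K = "k1 + k2 + k3"
    have "W * (pi / sqrt (r k1 * r k2 + r k2 * r k3 + r k3 * r k1))^n
        \<le> W * ((pi / (sqrt 3 * \<beta>))^n * (q powr (2*n/3))^?K)"
      using W unfolding r by (intro mult_left_mono pi_div_sqrt_shell_rates_le[OF \<beta> q]) auto
    also have "\<dots> = ((R/q) powr (-p*n) * exp (n/2))^3 * (pi / (sqrt 3 * \<beta>))^n * (q powr (-p*n) * q powr (2*n/3))^?K"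
      by (simp add: W_def w_def shell_weight_def power_add power_mult_distrib power3_eq_cube mult_ac)
    also have "q powr (-p*n) * q powr (2*n/3) = u"
      using q by (simp add: u_def powr_add[symmetric] algebra_simps)
    finally show "W * (pi / sqrt (r k1 * r k2 + r k2 * r k3 + r k3 * r k1))^n
        \<le> ((R/q) powr (-p*n) * exp (n/2))^3 * (pi / (sqrt 3 * \<beta>))^n * u^k1 * u^k2 * u^k3"
      by (simp add: power_add mult_ac)
  qed
  finally show ?thesis by (simp add: W_def \<beta>_def)
qed

lemma nn_integral_radial_triple_le:
  fixes R q p :: real and n :: nat
  assumes R: "R > 0" and q: "q > 1" and p: "p > 2/3" and n: "n \<ge> 1"
  defines "F \<equiv> \<lambda>x. ennreal ((eucl_norm n x ^ n + R^n) powr (-p))"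
  shows "(\<integral>\<^sup>+x1. \<integral>\<^sup>+x2. F x1 * F x2 * F (\<lambda>i. x1 i + x2 i) \<partial>Rspace n \<partial>Rspace n)
    \<le> ennreal (((R/q) powr (-p*n) * exp (n/2))^3 * (pi / (sqrt 3 * (n/(2*R\<^sup>2))))^n
               / (1 - q powr (-(p - 2/3)*n))^3)"
proof -
  define w where "w = shell_weight R q p n"
  define r where "r = shell_rate R q n"
  define T where "T k1 k2 k3 x1 x2 = ennreal (w k1 * w k2 * w k3 *
      (\<Prod>i<n. exp (-(r k1 * (x1 i)\<^sup>2 + r k2 * (x2 i)\<^sup>2 + r k3 * (x1 i + x2 i)\<^sup>2))))" for k1 k2 k3 x1 x2
  define Z where "Z = ((R/q) powr (-p*n) * exp (n/2))^3 * (pi / (sqrt 3 * (n/(2*R\<^sup>2))))^n"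
  define u where "u = q powr (-(p - 2/3)*n)"
  have u: "0 < u" "u < 1" using q p n by (auto simp: u_def mult_neg_pos intro!: powr_less_one)
  have T_measurable[measurable]: "T k1 k2 k3 x1 \<in> borel_measurable (Rspace n)" for k1 k2 k3 x1
    unfolding T_def by measurable
  have "(\<lambda>(x1, x2). T k1 k2 k3 x1 x2) \<in> borel_measurable (Rspace n \<Otimes>\<^sub>M Rspace n)" for k1 k2 k3
    unfolding T_def by measurable
  then have [measurable]: "(\<lambda>x1. \<integral>\<^sup>+x2. T k1 k2 k3 x1 x2 \<partial>Rspace n) \<in> borel_measurable (Rspace n)" for k1 k2 k3
    by (rule borel_measurable_nn_integral_Rspace)
  have "(\<integral>\<^sup>+x1. \<integral>\<^sup>+x2. F x1 * F x2 * F (\<lambda>i. x1 i + x2 i) \<partial>Rspace n \<partial>Rspace n)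
      \<le> (\<integral>\<^sup>+x1. \<integral>\<^sup>+x2. (\<Sum>k1. \<Sum>k2. \<Sum>k3. T k1 k2 k3 x1 x2) \<partial>Rspace n \<partial>Rspace n)"
    unfolding F_def T_def w_def r_def using R q p
    by (intro nn_integral_mono shell_triple_product_le) auto
  also have "\<dots> = (\<Sum>k1. \<Sum>k2. \<Sum>k3. \<integral>\<^sup>+x1. \<integral>\<^sup>+x2. T k1 k2 k3 x1 x2 \<partial>Rspace n \<partial>Rspace n)"
    by (simp add: nn_integral_suminf)
  also have "\<dots> \<le> (\<Sum>k1. \<Sum>k2. \<Sum>k3. ennreal (Z * u^k1 * u^k2 * u^k3))"
    unfolding T_def w_def r_def Z_def u_def using R q p n
    by (intro suminf_le summableI allI nn_integral_shell_term_le) auto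
  also have "\<dots> = ennreal (Z / (1-u)^3)"
    using u by (intro suminf3_geometric_ennreal) (auto simp: Z_def)
  finally show ?thesis by (simp add: Z_def u_def)
qed

section \<open>Normalisation by the volume of the unit ball\<close>

lemma nn_integral_exponential_density:
  assumes "l > 0"
  shows "(\<integral>\<^sup>+t. ennreal (exponential_density l t) \<partial>lborel) = 1"
proof -
  interpret prob_space "density lborel (exponential_density l)"
    by (rule prob_space_exponential_density[OF assms])
  show ?thesis using emeasure_space_1 by (simp add: emeasure_density)
qed

lemma powr_le_exp_mult:
  fixes x t \<kappa> :: real
  assumes x: "x > 0" and t: "t \<ge> 0" and \<kappa>: "\<kappa> > 0"
  shows "t powr x \<le> (x/(\<kappa>*exp 1)) powr x * exp (\<kappa>*t)"
proof (cases "t = 0")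
  case False
  then have t: "t > 0" using t by simp
  have "ln (\<kappa>*t/x) \<le> \<kappa>*t/x - 1" by (rule ln_le_minus_one) (use t x \<kappa> in simp)
  then have "x * ln (\<kappa>*t/x) \<le> \<kappa>*t - x" using x by (simp add: field_simps)
  then have "x * ln t \<le> x * ln (x/(\<kappa>*exp 1)) + \<kappa> * t"
    using t x \<kappa> by (simp add: ln_div ln_mult algebra_simps)
  then show ?thesis using t x \<kappa> by (simp add: powr_def exp_add[symmetric])
qed simp

lemma Gamma_plus_one_le:
  fixes x \<kappa> :: real
  assumes x: "x > 0" and \<kappa>: "0 < \<kappa>" "\<kappa> < 1"
  shows "Gamma (x+1) \<le> (x/(\<kappa>*exp 1)) powr x / (1-\<kappa>)"
proof -
  define C where "C = (x/(\<kappa>*exp 1)) powr x / (1-\<kappa>)"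
  have C: "C \<ge> 0" using \<kappa> by (simp add: C_def)
  \<comment> \<open>by \<open>powr_le_exp_mult\<close>, the Gamma integrand is dominated by \<open>C\<close> times the exponential density of rate \<open>1 - \<kappa>\<close>\<close>
  have dominated: "indicator {0..} t * t powr x / exp t \<le> C * exponential_density (1-\<kappa>) t" for t :: real
  proof (cases "t \<ge> 0")
    case True
    have "t powr x / exp t \<le> (x/(\<kappa>*exp 1)) powr x * exp (\<kappa>*t) / exp t"
      by (intro divide_right_mono powr_le_exp_mult) (use x True \<kappa> in auto)
    also have "\<dots> = (C * (1-\<kappa>)) * (exp (\<kappa>*t) / exp t)" using \<kappa> by (simp add: C_def)
    also have "\<dots> = C * ((1-\<kappa>) * exp (- t * (1-\<kappa>)))" by (simp add: exp_diff[symmetric] algebra_simps)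
    finally show ?thesis using True by (simp add: exponential_density_def)
  qed (simp add: exponential_density_def)
  have "ennreal (Gamma (x+1)) = (\<integral>\<^sup>+t. ennreal (indicator {0..} t * t powr x / exp t) \<partial>lborel)"
    using Gamma_conv_nn_integral_real[of "x+1"] x by simp
  also have "\<dots> \<le> (\<integral>\<^sup>+t. ennreal C * ennreal (exponential_density (1-\<kappa>) t) \<partial>lborel)"
    using C \<kappa> by (intro nn_integral_mono) (simp add: dominated ennreal_leI ennreal_mult[symmetric]
        exponential_density_nonneg)
  also have "\<dots> = ennreal C"
    using \<kappa> by (simp add: nn_integral_cmult nn_integral_exponential_density)
  finally show ?thesis using C by (simp add: C_def ennreal_le_iff)
qed

lemma Vn_pos: "Vn n > 0"
  unfolding Vn_def by (intro divide_pos_pos) (auto intro!: Gamma_real_pos)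

lemma Rn_pos: "\<delta> > 0 \<Longrightarrow> Rn n \<delta> > 0"
  unfolding Rn_def using Vn_pos[of n] by simp

lemma Rn_power:
  assumes "\<delta> > 0" "n \<ge> 1"
  shows "Rn n \<delta> ^ n = \<delta> / Vn n"
proof -
  have "Rn n \<delta> ^ n = ((\<delta> / Vn n) powr (1/real n)) powr real n"
    unfolding Rn_def using assms Vn_pos[of n] by (simp add: powr_realpow)
  also have "\<dots> = \<delta> / Vn n" using assms Vn_pos[of n] by (simp add: powr_powr)
  finally show ?thesis .
qed

lemma Vn_inverse_sq_le:
  fixes \<kappa> :: real
  assumes n: "n \<ge> 1" and \<kappa>: "0 < \<kappa>" "\<kappa> < 1"
  shows "1 / (Vn n)\<^sup>2 \<le> (n/(2*\<kappa>*exp 1))^n / ((1-\<kappa>)\<^sup>2 * pi^n)"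
proof -
  define G where "G = Gamma (n/2 + 1)"
  have G: "G > 0" unfolding G_def by (intro Gamma_real_pos) simp
  have "G \<le> (n/2/(\<kappa>*exp 1)) powr (n/2) / (1-\<kappa>)"
    unfolding G_def by (rule Gamma_plus_one_le) (use n \<kappa> in auto)
  then have "G\<^sup>2 \<le> ((n/2/(\<kappa>*exp 1)) powr (n/2) / (1-\<kappa>))\<^sup>2"
    using G by (intro power_mono) auto
  also have "\<dots> = ((n/2/(\<kappa>*exp 1)) powr (n/2))\<^sup>2 / (1-\<kappa>)\<^sup>2"
    by (rule power_divide)
  also have "((n/2/(\<kappa>*exp 1)) powr (n/2))\<^sup>2 = (n/(2*\<kappa>*exp 1))^n"
    using n \<kappa> by (simp add: powr_power powr_realpow mult.assoc)
  finally have "G\<^sup>2 \<le> (n/(2*\<kappa>*exp 1))^n / (1-\<kappa>)\<^sup>2" .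
  moreover have "1 / (Vn n)\<^sup>2 = G\<^sup>2 / pi^n"
    by (simp add: Vn_def G_def power_divide powr_power powr_realpow)
  ultimately show ?thesis
    using divide_right_mono[of "G\<^sup>2" "(n/(2*\<kappa>*exp 1))^n / (1-\<kappa>)\<^sup>2" "pi^n"]
    by (simp add: divide_divide_eq_left mult.commute)
qed

lemma powr_quotient_neg_scale:
  fixes R q p :: real and n :: nat
  assumes "R > 0" "q > 0"
  shows "(R/q) powr (-p*n) = (R^n) powr (-p) * (q powr p)^n"
proof -
  have "(R/q) powr (-p*n) = (R powr n) powr (-p) / q powr (-p*n)"
    using assms by (simp add: powr_divide powr_powr mult.commute)
  also have "(R powr n) powr (-p) = (R^n) powr (-p)" using assms by (simp add: powr_realpow)
  also have "1 / q powr (-p*n) = (q powr p)^n"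
    using assms by (simp add: powr_minus_divide[symmetric] powr_power mult.commute)
  then have "(R^n) powr (-p) / q powr (-p*n) = (R^n) powr (-p) * (q powr p)^n"
    by (metis times_divide_eq_right mult_1_right)
  finally show ?thesis .
qed

lemma decay_base_eq:
  fixes \<kappa> q c :: real and n :: nat
  assumes n: "n \<ge> 1" and \<kappa>: "\<kappa> > 0" and q: "q > 0"
  shows "(n/(2*\<kappa>*exp 1))^n / pi^n * (((q powr (2*c))^n * exp (n/2))^3 * (2*pi / (sqrt 3 * n))^n)
    = (exp (1/2) * q powr (6*c) / (\<kappa> * sqrt 3))^n"
proof -
  have "exp (n/2) = exp (1/2) ^ n" by (simp flip: exp_of_nat_mult)
  then have "(n/(2*\<kappa>*exp 1))^n / pi^n * (((q powr (2*c))^n * exp (n/2))^3 * (2*pi / (sqrt 3 * n))^n)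
      = (n/(2*\<kappa>*exp 1) / pi * ((q powr (2*c))^3 * exp (1/2) ^ 3) * (2*pi / (sqrt 3 * n)))^n"
    using n by (simp add: power_mult_distrib power_divide mult.commute flip: power_mult)
  also have "(q powr (2*c))^3 = q powr (6*c)" using q by (simp add: powr_power)
  also have "exp (1/2) ^ 3 = exp (1/2) * exp (1::real)" by (simp flip: exp_of_nat_mult exp_add)
  also have "n/(2*\<kappa>*exp 1) / pi * (q powr (6*c) * (exp (1/2) * exp 1)) * (2*pi / (sqrt 3 * n))
      = exp (1/2) * q powr (6*c) / (\<kappa> * sqrt 3)"
    using n \<kappa> by (simp add: field_simps)
  finally show ?thesis .
qed

lemma normalized_bound_le:
  fixes \<delta> c q \<kappa> :: real and n l :: nat
  assumes \<delta>: "\<delta> > 0" and c: "c > 1/3" and l: "l \<ge> 3" and q: "q > 1" and \<kappa>: "0 < \<kappa>" "\<kappa> < 1"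
    and n: "n \<ge> 1"
  defines "R \<equiv> Rn n \<delta>"
  shows "Vn n powr (- 2 * real l * c) * ((R^n) powr (-2*c))^(l-3)
      * (((R/q) powr (-(2*c)*n) * exp (n/2))^3 * (pi / (sqrt 3 * (n/(2*R\<^sup>2))))^n
         / (1 - q powr (-(2*c - 2/3)*n))^3)
    \<le> \<delta> powr (- 2 * real l * c) * \<delta>\<^sup>2 / ((1-\<kappa>)\<^sup>2 * (1 - q powr (-(2*c - 2/3)))^3)
      * (exp (1/2) * q powr (6*c) / (\<kappa> * sqrt 3))^n"
proof -
  define V where "V = Vn n"
  define P where "P = R^n"
  define u where "u = q powr (-(2*c - 2/3)*n)"
  define u1 where "u1 = q powr (-(2*c - 2/3))"
  define Y where "Y = ((q powr (2*c))^n * exp (n/2))^3 * (2*pi / (sqrt 3 * n))^n"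
  have V: "V > 0" by (simp add: V_def Vn_pos)
  have R: "R > 0" by (simp add: R_def Rn_pos \<delta>)
  have P: "P = \<delta> / V" unfolding P_def R_def V_def using \<delta> n by (rule Rn_power)
  have P_pos: "P > 0" using R by (simp add: P_def)
  have u: "0 < u" "u \<le> u1" "u1 < 1"
    using q c n by (auto simp: u_def u1_def intro!: powr_less_one)
  have Y: "Y \<ge> 0" by (simp add: Y_def)
  have weight: "(R/q) powr (-(2*c)*n) = P powr (-2*c) * (q powr (2*c))^n"
    using powr_quotient_neg_scale[OF R, of q "2*c" n] q by (simp add: P_def)
  have gauss: "(pi / (sqrt 3 * (n/(2*R\<^sup>2))))^n = (2*pi / (sqrt 3 * n))^n * P\<^sup>2"
  proof -
    have "pi / (sqrt 3 * (n/(2*R\<^sup>2))) = 2*pi / (sqrt 3 * n) * R\<^sup>2" using n R by (simp add: field_simps)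
    moreover have "(R\<^sup>2)^n = P\<^sup>2" unfolding P_def by (metis power_mult mult.commute)
    ultimately show ?thesis by (simp only: power_mult_distrib)
  qed
  have powers: "V powr (- 2 * real l * c) * (P powr (-2*c))^(l-3) * (P powr (-2*c))^3 = \<delta> powr (- 2 * real l * c)"
  proof -
    have "(P powr (-2*c))^(l-3) * (P powr (-2*c))^3 = P powr (- 2 * real l * c)"
      using P_pos l by (simp add: powr_power powr_add[symmetric] algebra_simps)
    then show ?thesis using V P_pos by (simp add: mult.assoc powr_mult[symmetric] P)
  qed
  have gamma: "P\<^sup>2 \<le> \<delta>\<^sup>2 * ((n/(2*\<kappa>*exp 1))^n / ((1-\<kappa>)\<^sup>2 * pi^n))"
    using mult_left_mono[OF Vn_inverse_sq_le[OF n \<kappa>], of "\<delta>\<^sup>2"] by (simp add: P V_def power_divide)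
  have rate: "(n/(2*\<kappa>*exp 1))^n / pi^n * Y = (exp (1/2) * q powr (6*c) / (\<kappa> * sqrt 3))^n"
    unfolding Y_def using n \<kappa> q by (intro decay_base_eq) auto
  have "Vn n powr (- 2 * real l * c) * ((R^n) powr (-2*c))^(l-3)
      * (((R/q) powr (-(2*c)*n) * exp (n/2))^3 * (pi / (sqrt 3 * (n/(2*R\<^sup>2))))^n / (1 - u)^3)
      = \<delta> powr (- 2 * real l * c) * P\<^sup>2 * Y / (1 - u)^3"
    unfolding weight gauss powers[symmetric] Y_def by (simp add: V_def P_def power_mult_distrib mult_ac)
  also have "\<dots> \<le> \<delta> powr (- 2 * real l * c) * (\<delta>\<^sup>2 * ((n/(2*\<kappa>*exp 1))^n / ((1-\<kappa>)\<^sup>2 * pi^n))) * Y / (1 - u1)^3"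
    using u Y gamma \<kappa> by (intro frac_le mult_right_mono mult_left_mono power_mono) auto
  also have "\<dots> = \<delta> powr (- 2 * real l * c) * \<delta>\<^sup>2 / ((1-\<kappa>)\<^sup>2 * (1 - u1)^3)
      * (exp (1/2) * q powr (6*c) / (\<kappa> * sqrt 3))^n"
    unfolding rate[symmetric] by (simp add: field_simps)
  finally show ?thesis by (simp only: u_def u1_def)
qed

lemma fstar_nonneg: "fstar n c \<delta> x \<ge> 0"
  by (simp add: fstar_def)

lemma fstar_le_max: "c > 0 \<Longrightarrow> \<delta> > 0 \<Longrightarrow> fstar n c \<delta> x \<le> (Rn n \<delta> ^ n) powr (-2*c)"
  unfolding fstar_def using Rn_pos[of \<delta> n] eucl_norm_nonneg[of n x] by (intro powr_mono2') auto

lemma mult_powers_le_max_power: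
  fixes f1 f2 f3 M :: real and l1 l2 l3 :: nat
  assumes "0 \<le> f1" "f1 \<le> M" "0 \<le> f2" "f2 \<le> M" "0 \<le> f3" "f3 \<le> M" "l1 > 0" "l2 > 0" "l3 > 0"
  shows "f1^l1 * f2^l2 * f3^l3 \<le> M^(l1+l2+l3-3) * (f1 * f2 * f3)"
proof -
  have single: "f^l \<le> M^(l-1) * f" if "0 \<le> f" "f \<le> M" "l > 0" for f :: real and l :: nat
  proof -
    have "f^l = f^(l-1) * f" using that by (simp add: power_eq_if)
    also have "\<dots> \<le> M^(l-1) * f" by (rule mult_right_mono[OF power_mono]) (use that in auto)
    finally show ?thesis .
  qed
  have "f1^l1 * f2^l2 * f3^l3 \<le> (M^(l1-1) * f1) * (M^(l2-1) * f2) * (M^(l3-1) * f3)"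
    using assms by (intro mult_mono single) (auto intro: mult_nonneg_nonneg)
  also have "\<dots> = M^(l1-1+(l2-1)+(l3-1)) * (f1 * f2 * f3)" by (simp add: power_add algebra_simps)
  also have "l1-1+(l2-1)+(l3-1) = l1+l2+l3-3" using assms by simp
  finally show ?thesis .
qed

lemma nn_integral_fstar_le:
  fixes c \<delta> q \<kappa> :: real and n l l1 l2 l3 :: nat
  assumes c: "c > 1/3" and \<delta>: "\<delta> > 0" and q: "q > 1" and \<kappa>: "0 < \<kappa>" "\<kappa> < 1" and n: "n \<ge> 1"
    and l: "l1 > 0" "l2 > 0" "l3 > 0" "l1 + l2 + l3 = l"
  shows "ennreal (Vn n powr (- 2 * real l * c)) *
      (\<integral>\<^sup>+ x1. \<integral>\<^sup>+ x2. ennreal (fstar n c \<delta> x1 ^ l1 * fstar n c \<delta> x2 ^ l2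
          * fstar n c \<delta> (\<lambda>i. x1 i + x2 i) ^ l3) \<partial>Rspace n \<partial>Rspace n)
    \<le> ennreal (\<delta> powr (- 2 * real l * c) * \<delta>\<^sup>2 / ((1-\<kappa>)\<^sup>2 * (1 - q powr (-(2*c - 2/3)))^3)
      * (exp (1/2) * q powr (6*c) / (\<kappa> * sqrt 3))^n)"
proof -
  define R where "R = Rn n \<delta>"
  have R: "R > 0" unfolding R_def by (rule Rn_pos[OF \<delta>])
  define M where "M = (R^n) powr (-2*c)"
  define F where "F x = ennreal ((eucl_norm n x ^ n + R^n) powr (-(2*c)))" for x
  define B where "B = ((R/q) powr (-(2*c)*n) * exp (n/2))^3
      * (pi / (sqrt 3 * (n/(2*R\<^sup>2))))^n / (1 - q powr (-(2*c - 2/3)*n))^3"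
  have fstar: "fstar n c \<delta> x = (eucl_norm n x ^ n + R^n) powr (-(2*c))" for x
    by (simp add: fstar_def R_def)
  have "ennreal (fstar n c \<delta> x1 ^ l1 * fstar n c \<delta> x2 ^ l2 * fstar n c \<delta> (\<lambda>i. x1 i + x2 i) ^ l3)
      \<le> ennreal (M^(l-3)) * (F x1 * F x2 * F (\<lambda>i. x1 i + x2 i))" for x1 x2
  proof -
    have "fstar n c \<delta> x1 ^ l1 * fstar n c \<delta> x2 ^ l2 * fstar n c \<delta> (\<lambda>i. x1 i + x2 i) ^ l3
        \<le> M^(l-3) * (fstar n c \<delta> x1 * fstar n c \<delta> x2 * fstar n c \<delta> (\<lambda>i. x1 i + x2 i))"
      unfolding l(4)[symmetric] M_def R_def using c \<delta>
      by (intro mult_powers_le_max_power fstar_le_max fstar_nonneg l) simp_all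
    then show ?thesis by (simp add: F_def M_def fstar[symmetric] fstar_nonneg ennreal_mult[symmetric] ennreal_leI)
  qed
  then have "(\<integral>\<^sup>+ x1. \<integral>\<^sup>+ x2. ennreal (fstar n c \<delta> x1 ^ l1 * fstar n c \<delta> x2 ^ l2
          * fstar n c \<delta> (\<lambda>i. x1 i + x2 i) ^ l3) \<partial>Rspace n \<partial>Rspace n)
      \<le> (\<integral>\<^sup>+ x1. \<integral>\<^sup>+ x2. ennreal (M^(l-3)) * (F x1 * F x2 * F (\<lambda>i. x1 i + x2 i)) \<partial>Rspace n \<partial>Rspace n)"
    by (intro nn_integral_mono)
  also have "\<dots> = ennreal (M^(l-3)) * (\<integral>\<^sup>+ x1. \<integral>\<^sup>+ x2. F x1 * F x2 * F (\<lambda>i. x1 i + x2 i) \<partial>Rspace n \<partial>Rspace n)"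
    by (rule nn_integral_Rspace_pair_cmult) (unfold F_def eucl_norm_def, measurable)
  also have "\<dots> \<le> ennreal (M^(l-3)) * ennreal B"
    using nn_integral_radial_triple_le[OF R q _ n, of "2*c"] c
    by (intro mult_left_mono) (simp_all add: F_def B_def)
  finally have "ennreal (Vn n powr (- 2 * real l * c)) *
      (\<integral>\<^sup>+ x1. \<integral>\<^sup>+ x2. ennreal (fstar n c \<delta> x1 ^ l1 * fstar n c \<delta> x2 ^ l2
          * fstar n c \<delta> (\<lambda>i. x1 i + x2 i) ^ l3) \<partial>Rspace n \<partial>Rspace n)
      \<le> ennreal (Vn n powr (- 2 * real l * c) * M^(l-3) * B)"
    by (simp add: M_def ennreal_mult' mult.assoc mult_left_mono)
  also have "Vn n powr (- 2 * real l * c) * M^(l-3) * B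
      \<le> \<delta> powr (- 2 * real l * c) * \<delta>\<^sup>2 / ((1-\<kappa>)\<^sup>2 * (1 - q powr (-(2*c - 2/3)))^3)
        * (exp (1/2) * q powr (6*c) / (\<kappa> * sqrt 3))^n"
    unfolding M_def B_def R_def by (rule normalized_bound_le[OF \<delta> _ _ q \<kappa> n]) (use c l in auto)
  finally show ?thesis by (simp add: ennreal_leI)
qed

lemma decay_parameters_exist:
  fixes c :: real
  assumes c: "c > 0"
  obtains q \<theta> :: real where "q > 1" "0 < \<theta>" "\<theta> < 1" "exp (1/2) * q powr (6*c) / (\<theta> * sqrt 3) = \<theta>"
proof
  define \<theta> :: real where "\<theta> = (exp 1 / 3) powr (1/6)"
  define q :: real where "q = (3 / exp 1) powr (1/(36*c))"
  have e3: "exp 1 < (3::real)" using e_less_272 by simp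
  show "0 < \<theta>" by (simp add: \<theta>_def)
  show "\<theta> < 1" using powr_less_mono2[of "1/6" "exp 1 / 3" 1] e3 by (simp add: \<theta>_def)
  show "q > 1" using e3 c by (simp add: q_def)
  have ln_q: "ln q = (ln 3 - 1) / (36*c)" using e3 by (simp add: q_def ln_div)
  have ln_\<theta>: "ln \<theta> = (1 - ln 3) / 6" using e3 by (simp add: \<theta>_def ln_div)
  have "ln (exp (1/2) * q powr (6*c) / (\<theta> * sqrt 3)) = 1/2 + 6*c * ln q - ln \<theta> - ln 3 / 2"
    using e3 by (simp add: q_def \<theta>_def ln_div ln_mult ln_sqrt)
  also have "\<dots> = ln \<theta>" unfolding ln_q ln_\<theta> using c by (simp add: field_simps)
  finally show "exp (1/2) * q powr (6*c) / (\<theta> * sqrt 3) = \<theta>"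
    using e3 by (subst (asm) ln_inj_iff) (auto simp: \<theta>_def q_def)
qed

theorem proposition5p5:
  fixes c \<delta> :: real and l :: nat
  assumes "c > 1/2" and "\<delta> > 0" and "l \<ge> 3"
  shows "\<exists>K > 0. \<exists>\<rho>. 0 < \<rho> \<and> \<rho> < 1 \<and>
    (\<forall>l1 l2 l3 :: nat. l1 > 0 \<longrightarrow> l2 > 0 \<longrightarrow> l3 > 0 \<longrightarrow> l1 + l2 + l3 = l \<longrightarrow>
      (\<forall>n::nat. n \<ge> 1 \<longrightarrow>
         ennreal (Vn n powr (- 2 * real l * c)) *
         (\<integral>\<^sup>+ x1. \<integral>\<^sup>+ x2. ennreal (fstar n c \<delta> x1 ^ l1 * fstar n c \<delta> x2 ^ l2
              * fstar n c \<delta> (\<lambda>i. x1 i + x2 i) ^ l3) \<partial>Rspace n \<partial>Rspace n)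
         \<le> ennreal (K * \<rho> ^ n)))"
proof -
  \<comment> \<open>the hypothesis \<open>l \<ge> 3\<close> is implied by \<open>l1 + l2 + l3 = l\<close> with positive \<open>l\<^sub>i\<close>\<close>
  have c: "c > 1/3" using assms(1) by simp
  obtain q \<theta> where q: "q > 1" and \<theta>: "0 < \<theta>" "\<theta> < 1"
    and rate: "exp (1/2) * q powr (6*c) / (\<theta> * sqrt 3) = \<theta>"
    using decay_parameters_exist[of c] c by auto
  define K where "K = \<delta> powr (- 2 * real l * c) * \<delta>\<^sup>2 / ((1-\<theta>)\<^sup>2 * (1 - q powr (-(2*c - 2/3)))^3)"
  have "q powr (-(2*c - 2/3)) < 1" using q c by (intro powr_less_one) auto
  then have "K > 0" using assms(2) \<theta> by (simp add: K_def)
  moreover have "ennreal (Vn n powr (- 2 * real l * c)) *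
         (\<integral>\<^sup>+ x1. \<integral>\<^sup>+ x2. ennreal (fstar n c \<delta> x1 ^ l1 * fstar n c \<delta> x2 ^ l2
              * fstar n c \<delta> (\<lambda>i. x1 i + x2 i) ^ l3) \<partial>Rspace n \<partial>Rspace n)
         \<le> ennreal (K * \<theta> ^ n)"
    if "l1 > 0" "l2 > 0" "l3 > 0" "l1 + l2 + l3 = l" "n \<ge> 1" for l1 l2 l3 n
    using nn_integral_fstar_le[OF c assms(2) q \<theta> that(5) that(1-4)] by (simp add: rate K_def)
  ultimately show ?thesis using \<theta> by blast
qed

end
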